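(* Let $p\ge5$ be prime and $f$ a modular form of weight $k$ on $\mathrm{SL}_2(\mathbb{Z})$ with integer Fourier coefficients. Let $n$ be the unique integer with $0\le np^2-k+1<p^2$. Then $D^{np^2-k+1}f$ is congruent to a modular form mod $p^2$; that is, the image of $D^{np^2-k+1}f\in\mathbb{Z}_{(p)}[P,Q,R]$ in $(\mathbb{Z}/p^2\mathbb{Z})[P,Q,R]$ lies in $(\mathbb{Z}/p^2\mathbb{Z})[Q,R]$.
   Context: $\mathbb{Z}_{(p)}$ is the localization of $\mathbb{Z}$ at $p$. $P=E_2,Q=E_4,R=E_6$ are the normalized Eisenstein series; quasimodular forms are identified with their unique polynomial expressions in $P,Q,R$, so $f\in\mathbb{Z}_{(p)}[Q,R]$. $D=q\frac{d}{dq}$ acts on $\mathbb{Z}_{(p)}[P,Q,R]$ as the derivation with $DP=\frac{P^2-Q}{12}$, $DQ=\frac{PQ-R}{3}$, $DR=\frac{PR-Q^2}{2}$. *)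

theory Defs
  imports Complex_Main "HOL-Computational_Algebra.Formal_Power_Series"
begin

text \<open>Polynomials in the three variables P, Q, R with rational coefficients are represented
  by their coefficient functions: g (a,b,c) is the coefficient of P^a Q^b R^c.
  (Only finitely supported functions are considered polynomials.)\<close>

type_synonym pqr = "nat \<times> nat \<times> nat \<Rightarrow> rat"

definition is_poly :: "pqr \<Rightarrow> bool" where
  "is_poly g \<longleftrightarrow> finite {m. g m \<noteq> 0}"

text \<open>The derivation D with D P = (P^2 - Q)/12, D Q = (P Q - R)/3, D R = (P R - Q^2)/2,
  extended by the Leibniz rule.  Applied to the monomial P^a Q^b R^c it gives
  (a/12 + b/3 + c/2) P^(a+1) Q^b R^c - a/12 P^(a-1) Q^(b+1) R^c
  - b/3 P^a Q^(b-1) R^(c+1) - c/2 P^a Q^(b+2) R^(c-1);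
  collecting the coefficient of P^a Q^b R^c yields the formula below.\<close>

definition Dop :: "pqr \<Rightarrow> pqr" where
  "Dop g = (\<lambda>(a,b,c).
      (if a \<ge> 1 then (of_nat (a-1) / 12 + of_nat b / 3 + of_nat c / 2) * g (a-1, b, c) else 0)
    - (if b \<ge> 1 then of_nat (a+1) / 12 * g (a+1, b-1, c) else 0)
    - (if c \<ge> 1 then of_nat (b+1) / 3 * g (a, b+1, c-1) else 0)
    - (if b \<ge> 2 then of_nat (c+1) / 2 * g (a, b-2, c+1) else 0))"

text \<open>Membership in Z_(p) (denominator in lowest terms not divisible by p).\<close>

definition p_integral :: "nat \<Rightarrow> rat \<Rightarrow> bool" where
  "p_integral p x \<longleftrightarrow> \<not> (int p dvd snd (quotient_of x))"

text \<open>Divisor sums and the q-expansions of Q = E4 and R = E6.\<close>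

definition sigma :: "nat \<Rightarrow> nat \<Rightarrow> nat" where
  "sigma j n = (\<Sum>d | d dvd n. d ^ j)"

definition E4 :: "rat fps" where
  "E4 = Abs_fps (\<lambda>n. if n = 0 then 1 else 240 * of_nat (sigma 3 n))"

definition E6 :: "rat fps" where
  "E6 = Abs_fps (\<lambda>n. if n = 0 then 1 else - 504 * of_nat (sigma 5 n))"

definition qexp_QR :: "pqr \<Rightarrow> rat fps" where
  "qexp_QR g = (\<Sum>(b,c) \<in> {(b,c). g (0,b,c) \<noteq> 0}. fps_const (g (0,b,c)) * E4 ^ b * E6 ^ c)"

definition modular_form :: "nat \<Rightarrow> pqr \<Rightarrow> bool" where
  "modular_form k g \<longleftrightarrow> is_poly g \<and>
     (\<forall>a b c. g (a,b,c) \<noteq> 0 \<longrightarrow> a = 0 \<and> 4*b + 6*c = k)"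

end

theory Submission
  imports Defs
begin

unbundle fps_syntax

text \<open>
  For \<open>f\<close> of weight \<open>k\<close> in \<open>Q\<close> and \<open>R\<close>, the rule \<open>D P = (P\<^sup>2 - Q) / 12\<close> gives the
  expansion in powers of \<open>P\<close>
    \<open>D\<^sup>j f = \<Sum>\<^sub>i (j choose i) (k + j - i) (k + j - i + 1) \<cdots> (k + j - 1) / 12\<^sup>i P\<^sup>i \<theta>\<^sup>[\<^sup>j\<^sup>-\<^sup>i\<^sup>] f\<close>,
  where \<open>\<theta>\<^sup>[\<^sup>r\<^sup>]\<close> are the iterated Serre derivatives of Kaneko and Zagier, which map
  \<open>\<int>\<^sub>(\<^sub>p\<^sub>)[Q, R]\<close> to itself because \<open>2\<close> and \<open>3\<close> are units for \<open>p \<ge> 5\<close>.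
  The coefficients of \<open>f\<close> itself are \<open>p\<close>-integral: in the basis
  \<open>Q\<^sup>a R\<^sup>e (Q\<^sup>3)\<^sup>m\<^sup>-\<^sup>s (R\<^sup>2 - Q\<^sup>3)\<^sup>s\<close> the \<open>q\<close>-expansion map is triangular with diagonal
  \<open>(-1728)\<^sup>s\<close>, a \<open>p\<close>-adic unit.
  For \<open>i > 0\<close> the rising factorial ends with the factor \<open>k + j - 1\<close>, which equals \<open>n p\<^sup>2\<close>
  when \<open>j = n p\<^sup>2 - k + 1\<close>, so every \<open>P\<close>-dependent coefficient of \<open>D\<^sup>j f\<close> is divisible by \<open>p\<^sup>2\<close>.
\<close>

section \<open>Rationals integral at p\<close>

lemma p_integral_iff_fraction:
  assumes "prime p"
  shows "p_integral p x \<longleftrightarrow> (\<exists>a b. \<not> int p dvd b \<and> x = of_int a / of_int b)"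
proof
  assume "p_integral p x"
  then show "\<exists>a b. \<not> int p dvd b \<and> x = of_int a / of_int b"
    unfolding p_integral_def by (metis prod.collapse quotient_of_div)
next
  assume "\<exists>a b. \<not> int p dvd b \<and> x = of_int a / of_int b"
  then obtain a b where b: "\<not> int p dvd b" and x: "x = of_int a / of_int b" by blast
  obtain u v where q: "quotient_of x = (u, v)" by (cases "quotient_of x")
  have "coprime u v" and "x = of_int u / of_int v" and "v > 0"
    using q quotient_of_coprime quotient_of_div quotient_of_denom_pos by blast+
  with x b have "of_int a * of_int v = (of_int u * of_int b :: rat)"
    by (auto simp: field_simps)
  then have "a * v = u * b" by (metis of_int_eq_iff of_int_mult)
  have "\<not> int p dvd v"
  proof
    assume pv: "int p dvd v"
    have p: "prime (int p)" using assms by simp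
    with pv \<open>coprime u v\<close> have "\<not> int p dvd u"
      using coprime_common_divisor not_prime_unit by blast
    moreover have "int p dvd u * b" using pv \<open>a * v = u * b\<close> by (metis dvd_mult2 mult.commute)
    ultimately show False using p b prime_dvd_mult_iff by blast
  qed
  then show "p_integral p x" unfolding p_integral_def q by simp
qed

context
  fixes p :: nat
  assumes p: "prime p"
begin

lemma p_integral_of_int [simp]: "p_integral p (of_int a)"
  using prime_gt_1_nat[OF p] by (simp add: p_integral_def quotient_of_int)

lemma p_integral_of_nat [simp]: "p_integral p (of_nat a)"
  using p_integral_of_int[of "int a"] by simp

lemma p_integral_0 [simp]: "p_integral p 0"
  using p_integral_of_nat[of 0] by simp

lemma p_integral_Ints: "x \<in> \<int> \<Longrightarrow> p_integral p x"
  by (auto elim: Ints_cases)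

lemma prime_not_dvd_mult: "\<not> int p dvd b \<Longrightarrow> \<not> int p dvd d \<Longrightarrow> \<not> int p dvd (b * d)"
  using p by (simp add: prime_dvd_mult_iff)

lemma p_integral_add: "p_integral p x \<Longrightarrow> p_integral p y \<Longrightarrow> p_integral p (x + y)"
proof -
  assume "p_integral p x" "p_integral p y"
  then obtain a b c d where b: "\<not> int p dvd b" "x = of_int a / of_int b"
    and d: "\<not> int p dvd d" "y = of_int c / of_int d"
    using p_integral_iff_fraction[OF p] by metis
  moreover have "b \<noteq> 0" "d \<noteq> 0" using b d by auto
  ultimately have "x + y = of_int (a * d + c * b) / of_int (b * d)"
    by (simp add: field_simps)
  then show ?thesis using p_integral_iff_fraction[OF p] prime_not_dvd_mult b d by blast
qed

lemma p_integral_mult: "p_integral p x \<Longrightarrow> p_integral p y \<Longrightarrow> p_integral p (x * y)"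
proof -
  assume "p_integral p x" "p_integral p y"
  then obtain a b c d where b: "\<not> int p dvd b" "x = of_int a / of_int b"
    and d: "\<not> int p dvd d" "y = of_int c / of_int d"
    using p_integral_iff_fraction[OF p] by metis
  then have "x * y = of_int (a * c) / of_int (b * d)" by simp
  then show ?thesis using p_integral_iff_fraction[OF p] prime_not_dvd_mult b d by blast
qed

lemma p_integral_divide: "p_integral p x \<Longrightarrow> \<not> int p dvd d \<Longrightarrow> p_integral p (x / of_int d)"
proof -
  assume "p_integral p x" and d: "\<not> int p dvd d"
  then obtain a b where b: "\<not> int p dvd b" "x = of_int a / of_int b"
    using p_integral_iff_fraction[OF p] by metis
  then have "x / of_int d = of_int a / of_int (b * d)" by simp
  then show ?thesis using p_integral_iff_fraction[OF p] prime_not_dvd_mult b d by blast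
qed

lemma p_integral_minus: "p_integral p x \<Longrightarrow> p_integral p (- x)"
  using p_integral_mult[of "-1" x] p_integral_of_int[of "-1"] by simp

lemma p_integral_diff: "p_integral p x \<Longrightarrow> p_integral p y \<Longrightarrow> p_integral p (x - y)"
  using p_integral_add[OF _ p_integral_minus] by simp

lemma p_integral_sum: "(\<And>i. i \<in> A \<Longrightarrow> p_integral p (f i)) \<Longrightarrow> p_integral p (sum f A)"
  by (induction A rule: infinite_finite_induct) (auto simp: p_integral_add)

end

lemma prime_ge_5_not_dvd_12_power:
  assumes "prime p" "5 \<le> p"
  shows "\<not> int p dvd 12 ^ i"
proof
  assume "int p dvd 12 ^ i"
  then have "p dvd 12 ^ i"
    by (metis of_nat_dvd_iff of_nat_numeral of_nat_power)
  then have "p dvd 2 * 2 * 3"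
    using assms(1) prime_dvd_power by auto
  then have "p dvd 2 \<or> p dvd 3"
    using assms(1) by (metis prime_dvd_mult_iff)
  then show False using assms(2) by (auto dest: dvd_imp_le)
qed

section \<open>The P-expansion of iterated derivatives\<close>

definition Dpow_coeff :: "nat \<Rightarrow> nat \<Rightarrow> nat \<Rightarrow> rat" where
  "Dpow_coeff k j i = of_nat ((j choose i) * pochhammer (k + j - i) i) / 12 ^ i"

lemma Dpow_coeff_0 [simp]: "Dpow_coeff k j 0 = 1"
  by (simp add: Dpow_coeff_def)

lemma Dpow_coeff_eq_0: "j < i \<Longrightarrow> Dpow_coeff k j i = 0"
  by (simp add: Dpow_coeff_def)

lemma Suc_times_choose_Suc: "Suc i * (j choose Suc i) = (j - i) * (j choose i)"
  using binomial_absorption[of i j] binomial_absorb_comp[of j i] by simp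

lemma Dpow_coeff_Suc_Suc:
  assumes "i \<le> j"
  shows "Dpow_coeff k (Suc j) (Suc i) =
           of_nat (k + 2 * j - i) / 12 * Dpow_coeff k j i + Dpow_coeff k j (Suc i)"
proof -
  define X where "X = pochhammer (k + j - i) i"
  have lhs: "pochhammer (k + j - i) (Suc i) = (k + j) * X"
    using assms by (simp add: pochhammer_rec' X_def)
  have rhs: "pochhammer (k + j - Suc i) (Suc i) = (k + j - Suc i) * X"
  proof (cases "k + j = i")
    case False
    then have "k + j - Suc i + 1 = k + j - i" using assms by simp
    then show ?thesis by (simp add: pochhammer_rec X_def)
  qed (simp add: pochhammer_0_left)
  have "int ((Suc j choose Suc i) * (k + j)) =
          int ((k + 2 * j - i) * (j choose i) + (j choose Suc i) * (k + j - Suc i))"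
  proof (cases "k + j = i")
    case True
    then have "j = i" "k = 0" using assms by auto
    then show ?thesis by simp
  next
    case False
    have "int (Suc i * (j choose Suc i)) = int ((j - i) * (j choose i))"
      by (simp only: Suc_times_choose_Suc)
    moreover have "int (k + 2 * j - i) = int k + 2 * int j - int i"
      and "int (k + j - Suc i) = int k + int j - int i - 1" and "int (j - i) = int j - int i"
      using assms False by auto
    ultimately show ?thesis
      unfolding of_nat_add of_nat_mult of_nat_Suc by (simp add: algebra_simps)
  qed
  then have "(Suc j choose Suc i) * ((k + j) * X) =
               (k + 2 * j - i) * ((j choose i) * X) + (j choose Suc i) * ((k + j - Suc i) * X)"
    by (simp only: of_nat_eq_iff flip: mult.assoc add_mult_distrib)
  then have eq: "(of_nat ((Suc j choose Suc i) * ((k + j) * X)) :: rat) =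
               of_nat (k + 2 * j - i) * of_nat ((j choose i) * X)
               + of_nat ((j choose Suc i) * ((k + j - Suc i) * X))"
    by (simp only: of_nat_eq_iff flip: of_nat_mult of_nat_add)
  have c: "Dpow_coeff k (Suc j) (Suc i) = of_nat ((Suc j choose Suc i) * ((k + j) * X)) / 12 ^ Suc i"
    "Dpow_coeff k j i = of_nat ((j choose i) * X) / 12 ^ i"
    "Dpow_coeff k j (Suc i) = of_nat ((j choose Suc i) * ((k + j - Suc i) * X)) / 12 ^ Suc i"
    by (simp_all add: Dpow_coeff_def lhs rhs flip: X_def)
  show ?thesis unfolding c eq by (simp add: field_simps)
qed

lemma Dpow_coeff_Suc:
  "Dpow_coeff k (Suc j) i =
     (if i = 0 then 0 else of_nat (k + 2 * j + 1 - i) / 12 * Dpow_coeff k j (i - 1))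
     + Dpow_coeff k j i"
proof (cases i)
  case (Suc i')
  then show ?thesis
    by (cases "i' \<le> j") (simp_all add: Dpow_coeff_Suc_Suc Dpow_coeff_eq_0)
qed simp

lemma Dpow_coeff_Suc_index:
  "of_nat (Suc i) / 12 * Dpow_coeff k j (Suc i) =
     of_nat (j - i) * of_nat (k + (j - i) - 1) / 144 * Dpow_coeff k j i"
proof (cases "i < j")
  case True
  define Y where "Y = pochhammer (k + j - i) i"
  have "k + j - Suc i + 1 = k + j - i" using True by simp
  then have poch: "pochhammer (k + j - Suc i) (Suc i) = (k + (j - i) - 1) * Y"
    using True by (simp add: pochhammer_rec Y_def)
  have "Suc i * ((j choose Suc i) * ((k + (j - i) - 1) * Y)) =
          (j - i) * (k + (j - i) - 1) * ((j choose i) * Y)"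
    by (simp only: mult.assoc [symmetric] Suc_times_choose_Suc) (simp only: mult_ac)
  then have "of_nat (Suc i) * of_nat ((j choose Suc i) * ((k + (j - i) - 1) * Y)) =
               (of_nat (j - i) * of_nat (k + (j - i) - 1) * of_nat ((j choose i) * Y) :: rat)"
    by (simp only: of_nat_mult [symmetric])
  then show ?thesis
    unfolding Dpow_coeff_def poch Y_def[symmetric] by (simp add: field_simps)
qed (simp add: Dpow_coeff_eq_0)

definition isobaric :: "nat \<Rightarrow> (nat \<times> nat \<Rightarrow> rat) \<Rightarrow> bool" where
  "isobaric w h \<longleftrightarrow> (\<forall>b c. h (b, c) \<noteq> 0 \<longrightarrow> 4 * b + 6 * c = w)"

text \<open>The Serre derivative on Q-R-polynomials: \<open>\<theta> Q = - R / 3\<close>, \<open>\<theta> R = - Q\<^sup>2 / 2\<close>.\<close>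

definition serre_QR :: "(nat \<times> nat \<Rightarrow> rat) \<Rightarrow> nat \<times> nat \<Rightarrow> rat" where
  "serre_QR h = (\<lambda>(b, c).
      - (if c \<ge> 1 then of_nat (b + 1) / 3 * h (b + 1, c - 1) else 0)
      - (if b \<ge> 2 then of_nat (c + 1) / 2 * h (b - 2, c + 1) else 0))"

definition times_Q :: "(nat \<times> nat \<Rightarrow> rat) \<Rightarrow> nat \<times> nat \<Rightarrow> rat" where
  "times_Q h = (\<lambda>(b, c). if b \<ge> 1 then h (b - 1, c) else 0)"

text \<open>The iterated Serre derivatives \<open>\<theta>\<^sup>[\<^sup>r\<^sup>]\<close> of Kaneko and Zagier, applied to the
  P-free part of a form of weight \<open>k\<close>.\<close>

fun serre_iter :: "nat \<Rightarrow> pqr \<Rightarrow> nat \<Rightarrow> nat \<times> nat \<Rightarrow> rat" where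
  "serre_iter k f 0 = (\<lambda>(b, c). f (0, b, c))"
| "serre_iter k f (Suc 0) = serre_QR (serre_iter k f 0)"
| "serre_iter k f (Suc (Suc r)) = (\<lambda>x. serre_QR (serre_iter k f (Suc r)) x
      - of_nat (Suc r) * of_nat (k + r) / 144 * times_Q (serre_iter k f r) x)"

lemma serre_iter_Suc:
  "serre_iter k f (Suc r) x = serre_QR (serre_iter k f r) x
     - of_nat r * of_nat (k + r - 1) / 144 * times_Q (serre_iter k f (r - 1)) x"
  by (cases r) auto

lemma isobaric_serre_QR:
  assumes "isobaric w h"
  shows "isobaric (w + 2) (serre_QR h)"
  unfolding isobaric_def
proof (intro allI impI)
  fix b c
  assume "serre_QR h (b, c) \<noteq> 0"
  then consider "1 \<le> c" "h (b + 1, c - 1) \<noteq> 0" | "2 \<le> b" "h (b - 2, c + 1) \<noteq> 0"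
    by (cases "h (b + 1, c - 1) = 0"; cases "h (b - 2, c + 1) = 0")
      (auto simp: serre_QR_def split: if_splits)
  then show "4 * b + 6 * c = w + 2"
    using assms unfolding isobaric_def by cases force+
qed

lemma isobaric_times_Q: "isobaric w h \<Longrightarrow> isobaric (w + 4) (times_Q h)"
  unfolding isobaric_def times_Q_def by (force split: if_splits)

lemma isobaric_diff: "isobaric w g \<Longrightarrow> isobaric w h \<Longrightarrow> isobaric w (\<lambda>x. g x - h x)"
  unfolding isobaric_def by (metis diff_zero)

lemma isobaric_scale: "isobaric w h \<Longrightarrow> isobaric w (\<lambda>x. a * h x)"
  unfolding isobaric_def by auto

lemma isobaric_serre_iter:
  assumes "modular_form k f"
  shows "isobaric (k + 2 * r) (serre_iter k f r)"
  using assms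
proof (induction k f r rule: serre_iter.induct)
  case (1 k f)
  then show ?case by (simp add: modular_form_def isobaric_def)
next
  case (2 k f)
  then show ?case using isobaric_serre_QR by fastforce
next
  case (3 k f r)
  have w: "k + 2 * Suc (Suc r) = k + 2 * Suc r + 2" "k + 2 * Suc (Suc r) = k + 2 * r + 4"
    by simp_all
  have "isobaric (k + 2 * Suc (Suc r)) (serre_QR (serre_iter k f (Suc r)))"
    unfolding w(1) by (rule isobaric_serre_QR) (use 3 in blast)
  moreover have "isobaric (k + 2 * Suc (Suc r)) (times_Q (serre_iter k f r))"
    unfolding w(2) by (rule isobaric_times_Q) (use 3 in blast)
  ultimately show ?case
    unfolding serre_iter.simps(3) by (intro isobaric_diff isobaric_scale)
qed

lemma isobaric_weight_factor:
  assumes "isobaric w h"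
  shows "(of_nat x / 12 + of_nat b / 3 + of_nat c / 2) * h (b, c) = of_nat (x + w) / 12 * h (b, c)"
proof (cases "h (b, c) = 0")
  case False
  then have "(of_nat (4 * b + 6 * c) :: rat) = of_nat w"
    using assms unfolding isobaric_def by presburger
  then show ?thesis by (simp add: field_simps)
qed simp

lemma Dpow_coeff_times_serre_iter:
  "Dpow_coeff k j i * serre_iter k f (Suc j - i) x =
     Dpow_coeff k j i * serre_QR (serre_iter k f (j - i)) x
     - Dpow_coeff k j i * (of_nat (j - i) * of_nat (k + (j - i) - 1) / 144
         * times_Q (serre_iter k f (j - i - 1)) x)"
proof (cases "i \<le> j")
  case True
  then have "Suc j - i = Suc (j - i)" by simp
  then show ?thesis by (simp only: serre_iter_Suc right_diff_distrib)
qed (simp add: Dpow_coeff_eq_0)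

lemma Dop_expansion_step:
  assumes f: "modular_form k f"
    and F: "\<And>i b c. F (i, b, c) = Dpow_coeff k j i * serre_iter k f (j - i) (b, c)"
  shows "Dop F (i, b, c) = Dpow_coeff k (Suc j) i * serre_iter k f (Suc j - i) (b, c)"
proof -
  let ?T = "serre_iter k f" and ?C = "Dpow_coeff k j"
  let ?L = "if i = 0 then 0 else of_nat (k + 2 * j + 1 - i) / 12 * ?C (i - 1)"
  let ?a = "of_nat (j - i) * of_nat (k + (j - i) - 1) / 144 :: rat"
  have P_lowered: "(if i \<ge> 1 then (of_nat (i - 1) / 12 + of_nat b / 3 + of_nat c / 2) * F (i - 1, b, c) else 0)
      = ?L * ?T (Suc j - i) (b, c)"
  proof (cases "i = 0 \<or> Suc j < i")
    case False
    then have "j - (i - 1) = Suc j - i" "i - 1 + (k + 2 * (Suc j - i)) = k + 2 * j + 1 - i" by auto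
    then show ?thesis
      using False isobaric_weight_factor[OF isobaric_serre_iter[OF f], of "i - 1" b c "Suc j - i"]
      by (simp add: F)
  qed (auto simp: F Dpow_coeff_eq_0)
  have P_raised: "(if b \<ge> 1 then of_nat (i + 1) / 12 * F (i + 1, b - 1, c) else 0)
      = ?C i * (?a * times_Q (?T (j - i - 1)) (b, c))"
    using Dpow_coeff_Suc_index[of i k j] by (simp add: F times_Q_def)
  have QR_part: "(if c \<ge> 1 then of_nat (b + 1) / 3 * F (i, b + 1, c - 1) else 0)
      + (if b \<ge> 2 then of_nat (c + 1) / 2 * F (i, b - 2, c + 1) else 0)
      = - (?C i * serre_QR (?T (j - i)) (b, c))"
    by (simp add: F serre_QR_def algebra_simps)
  have serre_step: "?C i * ?T (Suc j - i) (b, c)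
      = ?C i * serre_QR (?T (j - i)) (b, c) - ?C i * (?a * times_Q (?T (j - i - 1)) (b, c))"
    by (rule Dpow_coeff_times_serre_iter)
  have "Dop F (i, b, c) =
      (if i \<ge> 1 then (of_nat (i - 1) / 12 + of_nat b / 3 + of_nat c / 2) * F (i - 1, b, c) else 0)
    - (if b \<ge> 1 then of_nat (i + 1) / 12 * F (i + 1, b - 1, c) else 0)
    - ((if c \<ge> 1 then of_nat (b + 1) / 3 * F (i, b + 1, c - 1) else 0)
       + (if b \<ge> 2 then of_nat (c + 1) / 2 * F (i, b - 2, c + 1) else 0))"
    by (simp only: Dop_def case_prod_conv diff_diff_eq)
  also have "\<dots> = ?L * ?T (Suc j - i) (b, c) - ?C i * (?a * times_Q (?T (j - i - 1)) (b, c))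
      + ?C i * serre_QR (?T (j - i)) (b, c)"
    by (simp only: P_lowered P_raised QR_part diff_minus_eq_add)
  also have "\<dots> = (?L + ?C i) * ?T (Suc j - i) (b, c)"
    by (simp only: distrib_right serre_step)
  finally show ?thesis by (simp only: Dpow_coeff_Suc)
qed

lemma Dop_power_expansion:
  assumes "modular_form k f"
  shows "(Dop ^^ j) f (i, b, c) = Dpow_coeff k j i * serre_iter k f (j - i) (b, c)"
proof (induction j arbitrary: i b c)
  case 0
  then show ?case
    using assms by (cases i) (auto simp: modular_form_def Dpow_coeff_eq_0)
next
  case (Suc j)
  then show ?case
    using Dop_expansion_step[OF assms, of "(Dop ^^ j) f" j] by simp
qed

section \<open>Integrality of the P-expansion\<close>

context
  fixes p :: nat
  assumes p: "prime p" and p_ge_5: "5 \<le> p"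
begin

lemma p_integral_divide_dvd_12_power:
  assumes "p_integral p x" "d dvd 12 ^ i"
  shows "p_integral p (x / of_int d)"
  using assms p_integral_divide[OF p] prime_ge_5_not_dvd_12_power[OF p p_ge_5]
  by (meson dvd_trans)

lemma p_integral_divide_numeral:
  "p_integral p x \<Longrightarrow> numeral d dvd (12::int) ^ i \<Longrightarrow> p_integral p (x / numeral d)"
  using p_integral_divide_dvd_12_power[of x "numeral d"] by simp

lemma p_integral_serre_QR:
  assumes h: "\<And>x. p_integral p (h x)"
  shows "p_integral p (serre_QR h y)"
proof -
  obtain b c where y: "y = (b, c)" by (cases y)
  show ?thesis
    unfolding y serre_QR_def case_prod_conv
    by (intro p_integral_diff[OF p] p_integral_minus[OF p]; simp only: if_split)
      (auto intro!: p_integral_mult[OF p] p_integral_divide_numeral[where i = 1] h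
        p_integral_of_nat[OF p] simp: p simp del: of_nat_add of_nat_Suc)
qed

lemma p_integral_times_Q: "(\<And>x. p_integral p (h x)) \<Longrightarrow> p_integral p (times_Q h y)"
  by (cases y) (simp add: times_Q_def p)

lemma p_integral_serre_iter:
  assumes "\<And>b c. p_integral p (f (0, b, c))"
  shows "p_integral p (serre_iter k f r x)"
  using assms
proof (induction k f r arbitrary: x rule: serre_iter.induct)
  case (3 k f r)
  then show ?case
    unfolding serre_iter.simps(3)
    by (intro p_integral_diff[OF p] p_integral_mult[OF p] p_integral_divide_numeral[where i = 2]
        p_integral_serre_QR p_integral_times_Q p_integral_of_nat[OF p]) simp_all
qed (auto simp: p_integral_serre_QR)

lemma p_integral_Dpow_coeff: "p_integral p (Dpow_coeff k j i)"
proof -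
  have "p_integral p (of_nat ((j choose i) * pochhammer (k + j - i) i) / of_int (12 ^ i))"
    by (rule p_integral_divide_dvd_12_power[where i = i])
      (simp_all only: p_integral_of_nat[OF p] dvd_refl)
  then show ?thesis by (simp add: Dpow_coeff_def)
qed

text \<open>For \<open>0 < i \<le> j\<close> the last factor of the rising factorial in \<open>Dpow_coeff k j i\<close> is \<open>k + j - 1\<close>.\<close>

lemma p_integral_Dpow_coeff_divide:
  assumes "d dvd k + j - 1" and "0 < i"
  shows "p_integral p (Dpow_coeff k j i / of_nat d)"
proof (cases "i \<le> j \<and> d \<noteq> 0")
  case True
  from \<open>0 < i\<close> obtain i' where i: "i = Suc i'" by (cases i) auto
  obtain t where t: "k + j - 1 = d * t" using assms(1) by blast
  have "pochhammer (k + j - i) i = (k + j - 1) * pochhammer (k + j - i) i'"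
    using True i by (simp add: pochhammer_rec')
  then have "Dpow_coeff k j i / of_nat d = of_nat (d * ((j choose i) * t * pochhammer (k + j - i) i')) / of_nat d / 12 ^ i"
    unfolding Dpow_coeff_def t by (simp add: field_simps)
  also have "\<dots> = of_nat ((j choose i) * t * pochhammer (k + j - i) i') / of_int (12 ^ i)"
    using True by simp
  finally show ?thesis
    by (simp only: p_integral_divide_dvd_12_power[where i = i] p_integral_of_nat[OF p] dvd_refl)
qed (auto simp: Dpow_coeff_eq_0 p)

end

section \<open>Integrality from the q-expansion\<close>

definition int_coeffs :: "rat fps \<Rightarrow> bool" where
  "int_coeffs X \<longleftrightarrow> (\<forall>n. X $ n \<in> \<int>)"

lemma int_coeffs_mult: "int_coeffs X \<Longrightarrow> int_coeffs Y \<Longrightarrow> int_coeffs (X * Y)"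
  unfolding int_coeffs_def fps_mult_nth by (auto intro!: Ints_sum Ints_mult)

lemma int_coeffs_power: "int_coeffs X \<Longrightarrow> int_coeffs (X ^ n)"
  by (induction n) (auto simp: int_coeffs_mult, auto simp: int_coeffs_def)

lemma int_coeffs_diff: "int_coeffs X \<Longrightarrow> int_coeffs Y \<Longrightarrow> int_coeffs (X - Y)"
  unfolding int_coeffs_def by (auto intro!: Ints_diff)

lemma int_coeffs_E4: "int_coeffs E4"
  unfolding int_coeffs_def E4_def by (simp add: Ints_mult)

lemma int_coeffs_E6: "int_coeffs E6"
  unfolding int_coeffs_def E6_def by (simp add: Ints_mult)

lemma E4_nth_0 [simp]: "E4 $ 0 = 1" and E6_nth_0 [simp]: "E6 $ 0 = 1"
  by (simp_all add: E4_def E6_def)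

lemma E4_nth_1: "E4 $ 1 = 240" and E6_nth_1: "E6 $ 1 = -504"
  by (simp_all add: E4_def E6_def sigma_def)

lemma fps_power_nth_1: "X $ 0 = (1::'a::comm_semiring_1) \<Longrightarrow> (X ^ n) $ 1 = of_nat n * X $ 1"
proof (induction n)
  case (Suc n)
  then show ?case
    by (simp add: fps_mult_nth atLeast0AtMost fps_power_zeroth algebra_simps)
qed simp

lemma E6_square_minus_E4_cube:
  obtains W where "int_coeffs W" "W $ 0 = -1728" "E6 ^ 2 - E4 ^ 3 = fps_X * W"
proof
  let ?W = "fps_shift 1 (E6 ^ 2 - E4 ^ 3)"
  show "int_coeffs ?W"
    using int_coeffs_diff[OF int_coeffs_power[OF int_coeffs_E6] int_coeffs_power[OF int_coeffs_E4]]
    by (simp add: int_coeffs_def)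
  show "?W $ 0 = -1728"
    using fps_power_nth_1[of E4 3] fps_power_nth_1[of E6 2] E4_nth_1 E6_nth_1 by simp
  show "E6 ^ 2 - E4 ^ 3 = fps_X * ?W"
    by (rule fps_ext) (simp add: fps_power_zeroth)
qed

lemma power_mult_power_eq_sum_binomial:
  fixes A B :: "'a::comm_ring_1"
  assumes "y \<le> m"
  shows "A ^ (m - y) * B ^ y = (\<Sum>s\<le>m. of_nat (y choose s) * (A ^ (m - s) * (B - A) ^ s))"
proof -
  have "B ^ y = (\<Sum>s\<le>y. of_nat (y choose s) * (B - A) ^ s * A ^ (y - s))"
    using binomial_ring[of "B - A" A y] by simp
  then have "A ^ (m - y) * B ^ y = (\<Sum>s\<le>y. of_nat (y choose s) * (A ^ (m - y) * A ^ (y - s) * (B - A) ^ s))"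
    by (simp add: sum_distrib_left mult_ac)
  also have "\<dots> = (\<Sum>s\<le>y. of_nat (y choose s) * (A ^ (m - s) * (B - A) ^ s))"
    using assms by (intro sum.cong) (simp_all flip: power_add)
  also have "\<dots> = (\<Sum>s\<le>m. of_nat (y choose s) * (A ^ (m - s) * (B - A) ^ s))"
    using assms by (intro sum.mono_neutral_left) (simp_all add: binomial_eq_0)
  finally show ?thesis .
qed

lemma p_integral_triangular:
  fixes W :: "nat \<Rightarrow> rat fps" and d :: "nat \<Rightarrow> rat" and u :: "nat \<Rightarrow> int"
  assumes p: "prime p"
    and W: "\<And>s. int_coeffs (W s)" "\<And>s. W s $ 0 = of_int (u s)" "\<And>s. \<not> int p dvd u s"
    and coeffs: "\<And>t. p_integral p (\<Sum>s\<le>m. d s * (fps_X ^ s * W s) $ t)"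
  shows "s \<le> m \<Longrightarrow> p_integral p (d s)"
proof (induction s rule: less_induct)
  case (less s)
  have "(\<Sum>s'\<le>m. d s' * (fps_X ^ s' * W s') $ s) = (\<Sum>s'\<le>s. d s' * (fps_X ^ s' * W s') $ s)"
    using less.prems by (intro sum.mono_neutral_right) (auto simp: fps_X_power_mult_nth)
  also have "\<dots> = (\<Sum>s'<s. d s' * W s' $ (s - s')) + d s * of_int (u s)"
    by (simp add: lessThan_Suc_atMost [symmetric] fps_X_power_mult_nth W(2))
  finally have eq: "d s * of_int (u s) = (\<Sum>s'\<le>m. d s' * (fps_X ^ s' * W s') $ s) - (\<Sum>s'<s. d s' * W s' $ (s - s'))"
    by simp
  have "p_integral p (\<Sum>s'<s. d s' * W s' $ (s - s'))"
  proof (rule p_integral_sum[OF p], rule p_integral_mult[OF p])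
    fix s' assume "s' \<in> {..<s}"
    then show "p_integral p (d s')" using less by simp
    show "p_integral p (W s' $ (s - s'))"
      using W(1) by (simp add: int_coeffs_def p_integral_Ints p)
  qed
  then have "p_integral p (d s * of_int (u s))"
    unfolding eq by (rule p_integral_diff[OF p coeffs])
  then have "p_integral p (d s * of_int (u s) / of_int (u s))"
    by (rule p_integral_divide[OF p _ W(3)])
  moreover have "u s \<noteq> 0" using W(3) dvd_0_right by metis
  ultimately show ?case by simp
qed

lemma p_integral_binomial_inversion:
  fixes h :: "nat \<Rightarrow> rat"
  assumes p: "prime p"
    and sums: "\<And>s. s \<le> m \<Longrightarrow> p_integral p (\<Sum>y\<le>m. of_nat (y choose s) * h y)"
  shows "s \<le> m \<Longrightarrow> p_integral p (h s)"
proof (induction "m - s" arbitrary: s rule: less_induct)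
  case less
  have "(\<Sum>y\<le>m. of_nat (y choose s) * h y) = (\<Sum>y\<in>{s..m}. of_nat (y choose s) * h y)"
    by (intro sum.mono_neutral_right) auto
  also have "\<dots> = h s + (\<Sum>y\<in>{Suc s..m}. of_nat (y choose s) * h y)"
    using less.prems by (simp add: sum.atLeast_Suc_atMost)
  finally have "h s = (\<Sum>y\<le>m. of_nat (y choose s) * h y) - (\<Sum>y\<in>{Suc s..m}. of_nat (y choose s) * h y)"
    by simp
  moreover have "p_integral p (\<Sum>y\<in>{Suc s..m}. of_nat (y choose s) * h y)"
    using less by (auto intro!: p_integral_sum p_integral_mult p simp: p)
  ultimately show ?case
    using sums less.prems by (simp add: p_integral_diff p)
qed

lemma prime_ge_5_not_dvd_1728_power:
  assumes "prime p" "5 \<le> p"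
  shows "\<not> int p dvd (- 1728) ^ s"
proof -
  have "\<bar>(- 1728 :: int) ^ s\<bar> = 12 ^ (3 * s)"
    by (simp add: power_abs power_mult)
  then show ?thesis
    using prime_ge_5_not_dvd_12_power[OF assms, of "3 * s"] by (metis dvd_abs_iff)
qed

lemma p_integral_qexp_combination:
  fixes U :: "rat fps" and h :: "nat \<Rightarrow> rat"
  assumes p: "prime p" "5 \<le> p" and U: "int_coeffs U" "U $ 0 = 1"
    and coeffs: "\<And>t. p_integral p ((\<Sum>y\<le>m. fps_const (h y) * (U * (E4 ^ 3) ^ (m - y) * (E6 ^ 2) ^ y)) $ t)"
  shows "y \<le> m \<Longrightarrow> p_integral p (h y)"
proof -
  obtain W where W: "int_coeffs W" "W $ 0 = -1728" "E6 ^ 2 - E4 ^ 3 = fps_X * W"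
    by (rule E6_square_minus_E4_cube)
  define V where "V s = U * (E4 ^ 3) ^ (m - s) * W ^ s" for s
  define d where "d s = (\<Sum>y\<le>m. of_nat (y choose s) * h y)" for s
  have rebase: "U * (E4 ^ 3) ^ (m - y) * (E6 ^ 2) ^ y =
      (\<Sum>s\<le>m. fps_const (of_nat (y choose s)) * (fps_X ^ s * V s))" if "y \<le> m" for y
    using power_mult_power_eq_sum_binomial[OF that, of "E4 ^ 3" "E6 ^ 2"]
    unfolding W(3) V_def
    by (simp add: sum_distrib_left fps_of_nat power_mult_distrib mult_ac)
  have "(\<Sum>y\<le>m. fps_const (h y) * (U * (E4 ^ 3) ^ (m - y) * (E6 ^ 2) ^ y)) $ t =
      (\<Sum>y\<le>m. \<Sum>s\<le>m. h y * of_nat (y choose s) * (fps_X ^ s * V s) $ t)" for t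
    unfolding fps_sum_nth fps_mult_left_const_nth
  proof (intro sum.cong refl)
    fix y assume "y \<in> {..m}"
    then have "y \<le> m" by simp
    then show "h y * (U * (E4 ^ 3) ^ (m - y) * (E6 ^ 2) ^ y) $ t =
        (\<Sum>s\<le>m. h y * of_nat (y choose s) * (fps_X ^ s * V s) $ t)"
      by (simp only: rebase) (simp add: fps_sum_nth sum_distrib_left mult.assoc)
  qed
  also have "\<dots> t = (\<Sum>s\<le>m. d s * (fps_X ^ s * V s) $ t)" for t
    unfolding d_def sum_distrib_right by (subst sum.swap) (simp add: mult_ac)
  finally have "p_integral p (\<Sum>s\<le>m. d s * (fps_X ^ s * V s) $ t)" for t
    using coeffs by metis
  moreover have "int_coeffs (V s)" for s
    unfolding V_def by (intro int_coeffs_mult int_coeffs_power U(1) W(1) int_coeffs_E4)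
  moreover have "V s $ 0 = of_int ((- 1728) ^ s)" for s
    by (simp add: V_def fps_power_zeroth U(2) W(2))
  ultimately have "p_integral p (d s)" if "s \<le> m" for s
    using p_integral_triangular[OF p(1)] prime_ge_5_not_dvd_1728_power[OF p] that by blast
  then show "y \<le> m \<Longrightarrow> p_integral p (h y)"
    using p_integral_binomial_inversion[OF p(1)] unfolding d_def by blast
qed

lemma isobaric_monomial_param:
  fixes b c b' c' :: nat
  assumes "4 * b' + 6 * c' = 4 * b + 6 * c"
  shows "c' div 2 \<le> b div 3 + c div 2 \<and>
         (b', c') = (b mod 3 + 3 * (b div 3 + c div 2 - c' div 2), c mod 2 + 2 * (c' div 2))"
proof -
  have weight: "2 * b' + 3 * c' = 2 * b + 3 * c" using assms by simp
  have "c' mod 2 = (2 * (b' + c') + c') mod 2" by (simp only: mod_mult_self4)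
  also have "2 * (b' + c') + c' = 2 * (b + c) + c" using weight by simp
  finally have c_mod: "c' mod 2 = c mod 2" by (simp only: mod_mult_self4)
  have "b' mod 3 = (3 * (b' + 2 * c') + b') mod 3" by (simp only: mod_mult_self4)
  also have "3 * (b' + 2 * c') + b' = 3 * (b + 2 * c) + b" using weight by simp
  finally have b_mod: "b' mod 3 = b mod 3" by (simp only: mod_mult_self4)
  have "b' = 3 * (b' div 3) + b' mod 3" "c' = 2 * (c' div 2) + c' mod 2"
    "b = 3 * (b div 3) + b mod 3" "c = 2 * (c div 2) + c mod 2" by simp_all
  with weight b_mod c_mod have "b' div 3 + c' div 2 = b div 3 + c div 2" by linarith
  then have "c' div 2 \<le> b div 3 + c div 2" "b div 3 + c div 2 - c' div 2 = b' div 3"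
    by simp_all
  then show ?thesis by (simp flip: b_mod c_mod)
qed

lemma qexp_QR_weight_basis:
  assumes f: "modular_form k f" and weight: "4 * b + 6 * c = k"
  defines "m \<equiv> b div 3 + c div 2"
  shows "qexp_QR f = (\<Sum>y\<le>m. fps_const (f (0, b mod 3 + 3 * (m - y), c mod 2 + 2 * y))
           * (E4 ^ (b mod 3) * E6 ^ (c mod 2) * (E4 ^ 3) ^ (m - y) * (E6 ^ 2) ^ y))"
proof -
  define \<phi> where "\<phi> y = (b mod 3 + 3 * (m - y), c mod 2 + 2 * y)" for y
  define g where "g = (\<lambda>(b', c'). fps_const (f (0, b', c')) * E4 ^ b' * E6 ^ c')"
  have support: "{(b', c'). f (0, b', c') \<noteq> 0} \<subseteq> \<phi> ` {..m}"
  proof safe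
    fix b' c' assume "f (0, b', c') \<noteq> 0"
    then have "4 * b' + 6 * c' = 4 * b + 6 * c"
      using f weight by (simp add: modular_form_def)
    then show "(b', c') \<in> \<phi> ` {..m}"
      using isobaric_monomial_param unfolding \<phi>_def m_def by blast
  qed
  have "inj_on \<phi> {..m}" unfolding inj_on_def \<phi>_def by auto
  have "qexp_QR f = sum g (\<phi> ` {..m})"
    unfolding qexp_QR_def g_def using support by (intro sum.mono_neutral_left) auto
  also have "\<dots> = (\<Sum>y\<le>m. g (\<phi> y))"
    by (rule sum.reindex_cong[OF \<open>inj_on \<phi> {..m}\<close> refl refl])
  also have "\<dots> = (\<Sum>y\<le>m. fps_const (f (0, b mod 3 + 3 * (m - y), c mod 2 + 2 * y))
      * (E4 ^ (b mod 3) * E6 ^ (c mod 2) * (E4 ^ 3) ^ (m - y) * (E6 ^ 2) ^ y))"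
    by (simp only: g_def \<phi>_def case_prod_conv power_add power_mult) (simp add: mult_ac)
  finally show ?thesis .
qed

lemma modular_form_coeff_p_integral:
  assumes p: "prime p" "5 \<le> p" and f: "modular_form k f"
    and integral: "\<forall>j. qexp_QR f $ j \<in> \<int>"
  shows "p_integral p (f (0, b, c))"
proof (cases "f (0, b, c) = 0")
  case False
  then have weight: "4 * b + 6 * c = k"
    using f by (simp add: modular_form_def)
  define m where "m = b div 3 + c div 2"
  let ?U = "E4 ^ (b mod 3) * E6 ^ (c mod 2)"
  have "p_integral p ((\<Sum>y\<le>m. fps_const (f (0, b mod 3 + 3 * (m - y), c mod 2 + 2 * y))
      * (?U * (E4 ^ 3) ^ (m - y) * (E6 ^ 2) ^ y)) $ t)" for t
    using p_integral_Ints[OF p(1)] integral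
    unfolding m_def qexp_QR_weight_basis[OF f weight, symmetric] by blast
  moreover have "int_coeffs ?U" by (intro int_coeffs_mult int_coeffs_power int_coeffs_E4 int_coeffs_E6)
  moreover have "?U $ 0 = 1" by (simp add: fps_power_zeroth)
  ultimately have "p_integral p (f (0, b mod 3 + 3 * (m - y), c mod 2 + 2 * y))" if "y \<le> m" for y
    using p_integral_qexp_combination[OF p,
        where h = "\<lambda>y. f (0, b mod 3 + 3 * (m - y), c mod 2 + 2 * y)"] that by blast
  from this[of "c div 2"] show ?thesis by (simp add: m_def)
qed (simp add: p)

lemma dvd_add_diff_1:
  assumes "int j = n * int d - int k + 1"
  shows "d dvd k + j - 1"
proof (cases "k + j = 0")
  case False
  then have "int (k + j - 1) = int k + int j - 1" by linarith
  then have "int (k + j - 1) = n * int d" using assms by simp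
  then have "int d dvd int (k + j - 1)" by simp
  then show ?thesis by (simp only: of_nat_dvd_iff)
qed simp

theorem proposition3p9:
  fixes p k :: nat and n :: int and f :: pqr
  assumes "prime p" and "p \<ge> 5"
    and "modular_form k f"
    and "\<forall>j. fps_nth (qexp_QR f) j \<in> \<int>"
    and "0 \<le> n * int p ^ 2 - int k + 1" and "n * int p ^ 2 - int k + 1 < int p ^ 2"
  shows "\<forall>a b c.
           p_integral p (((Dop ^^ nat (n * int p ^ 2 - int k + 1)) f) (a,b,c)) \<and>
           (a > 0 \<longrightarrow> p_integral p (((Dop ^^ nat (n * int p ^ 2 - int k + 1)) f) (a,b,c) / of_nat (p^2)))"
proof (intro allI)
  fix a b c
  define j where "j = nat (n * int p ^ 2 - int k + 1)"
  have "p ^ 2 dvd k + j - 1"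
    using assms(5) by (intro dvd_add_diff_1[where n = n]) (simp add: j_def)
  have "p_integral p (serre_iter k f (j - a) (b, c))"
    using modular_form_coeff_p_integral[OF assms(1-4)] by (rule p_integral_serre_iter[OF assms(1,2)])
  then have "p_integral p (Dpow_coeff k j a * serre_iter k f (j - a) (b, c))"
    and "a > 0 \<Longrightarrow> p_integral p (Dpow_coeff k j a / of_nat (p ^ 2) * serre_iter k f (j - a) (b, c))"
    using p_integral_Dpow_coeff_divide[OF assms(1,2) \<open>p ^ 2 dvd k + j - 1\<close>]
      p_integral_Dpow_coeff[OF assms(1,2)] p_integral_mult[OF assms(1)] by blast+
  then show "p_integral p ((Dop ^^ j) f (a, b, c)) \<and>
      (a > 0 \<longrightarrow> p_integral p ((Dop ^^ j) f (a, b, c) / of_nat (p ^ 2)))"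
    by (simp add: Dop_power_expansion[OF assms(3)])
qed

end
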